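(* Let $P\subset\mathbb R^d$ be a $d$-polytope, $d\geq 3$, $S$ a simplex facet of $P$ in bounded position, and $\mathcal F,\mathcal N\subseteq\operatorname{adj}(S)$ disjoint with $\mathcal F$ nonsimple. Let $v\in V_S(\mathcal F,\mathcal N;P)$ and $Q=\operatorname{conv}(P\cup\{v\})$. Then: (1) the relative interiors of $S$ and of every facet in $\mathcal N$ lie in the interior of $Q$; (2) $Q$ has facets of the following four types (and every facet of $Q$ is of one of them): (a) every facet of $P$ not in $\{S\}\cup\mathcal N\cup\mathcal F$ is a facet of $Q$ (unchanged); (b) for every ridge $R=S\cap F$ with $F\in\operatorname{adj}(S)\setminus(\mathcal F\cup\mathcal N)$, the pyramid $\operatorname{conv}(R\cup\{v\})$ is a facet of $Q$; (c) for every ridge $R=N\cap F$ with $N\in\mathcal N$ and $F$ a facet of $P$ not in $\mathcal F\cup\mathcal N\cup\{S\}$, the pyramid $\operatorname{conv}(R\cup\{v\})$ is a facet of $Q$; (d) for every $F\in\mathcal F$, $\operatorname{conv}(F\cup\{v\})$ is a facet of $Q$, and it is the pseudo-stacking of $F$ (viewed as a $(d-1)$-polytope in $H_F$) above its facet $S\cap F$ with respect to $\emptyset$ and $\mathcal N_F:=\{N\cap F: N\in\mathcal N\}$, by the point $v$.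
   Context: For a facet $F$ of a $d$-polytope $P\subset\mathbb R^d$ let $H_F=\{x:\langle x,a_F\rangle=\ell_F\}$ be its affine hull, oriented so that $P\subseteq\{x:\langle x,a_F\rangle\geq\ell_F\}$; $H_F^+$, $H_F^-$ are the open sides $\{>\}$, $\{<\}$. Two facets are adjacent if they share a ridge; $\operatorname{adj}(S)$ is the set of facets adjacent to $S$. A simplex facet is a facet combinatorially equivalent to a $(d-1)$-simplex. A facet $S$ is in bounded position if for every set of $d$ facets in $\operatorname{adj}(S)$ their hyperplanes intersect in a point of $H_S^-$. A subset $\mathcal F\subseteq\operatorname{adj}(S)$ is nonsimple if there is no pair of adjacent facets $G,G'\in\mathcal F$ having a common $(d-3)$-face with $S$. For disjoint $\mathcal F,\mathcal N\subseteq\operatorname{adj}(S)$, $V_S(\mathcal F,\mathcal N;P)$ is the set of points lying in $H_F^-$ for $F\in\mathcal N\cup\{S\}$, in $H_F$ for $F\in\mathcal F$, and in $H_F^+$ for all other facets $F$ of $P$. The pseudo-stacking of a polytope $P'$ above a simplex facet $S'$ with respect to $\mathcal F',\mathcal N'$ is $\operatorname{conv}(P'\cup\{w\})$ for a point $w\in V_{S'}(\mathcal F',\mathcal N';P')$ (computed inside the affine hull of $P'$). *)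

theory Defs
  imports "HOL-Analysis.Analysis"
begin

text \<open>All notions are relative to the affine hull of the polytope, so that they can be
applied both to a full-dimensional polytope in the ambient space and to a facet
viewed as a polytope in its own affine hull.\<close>

definition facet_ineq :: "'a::euclidean_space set \<Rightarrow> 'a set \<Rightarrow> 'a \<Rightarrow> real \<Rightarrow> bool" where
  "facet_ineq P F a b \<longleftrightarrow> a \<noteq> 0 \<and> affine hull P \<inter> {x. a \<bullet> x = b} = affine hull F
      \<and> P \<subseteq> {x. a \<bullet> x \<ge> b}"

definition Hplus :: "'a::euclidean_space set \<Rightarrow> 'a set \<Rightarrow> 'a set" where
  "Hplus P F = {x \<in> affine hull P. \<exists>a b. facet_ineq P F a b \<and> a \<bullet> x > b}"

definition Hminus :: "'a::euclidean_space set \<Rightarrow> 'a set \<Rightarrow> 'a set" where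
  "Hminus P F = {x \<in> affine hull P. \<exists>a b. facet_ineq P F a b \<and> a \<bullet> x < b}"

definition adjacent_facets :: "'a::euclidean_space set \<Rightarrow> 'a set \<Rightarrow> 'a set \<Rightarrow> bool" where
  "adjacent_facets P F G \<longleftrightarrow> F facet_of P \<and> G facet_of P \<and> aff_dim (F \<inter> G) = aff_dim P - 2"

definition adj :: "'a::euclidean_space set \<Rightarrow> 'a set \<Rightarrow> 'a set set" where
  "adj P S = {F. adjacent_facets P S F}"

definition simplex_facet :: "'a::euclidean_space set \<Rightarrow> 'a set \<Rightarrow> bool" where
  "simplex_facet P S \<longleftrightarrow> S facet_of P \<and> (aff_dim P - 1) simplex S"

definition bounded_position :: "'a::euclidean_space set \<Rightarrow> 'a set \<Rightarrow> bool" where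
  "bounded_position P S \<longleftrightarrow>
     (\<forall>\<G>. \<G> \<subseteq> adj P S \<and> card \<G> = nat (aff_dim P) \<longrightarrow>
        (\<exists>x. (\<Inter>G\<in>\<G>. affine hull G) = {x} \<and> x \<in> Hminus P S))"

definition nonsimple :: "'a::euclidean_space set \<Rightarrow> 'a set \<Rightarrow> 'a set set \<Rightarrow> bool" where
  "nonsimple P S \<F> \<longleftrightarrow>
     \<not> (\<exists>G\<in>\<F>. \<exists>G'\<in>\<F>. adjacent_facets P G G' \<and>
          (\<exists>K. K face_of G \<and> K face_of G' \<and> K face_of S \<and> aff_dim K = aff_dim P - 3))"

definition Vregion :: "'a::euclidean_space set \<Rightarrow> 'a set \<Rightarrow> 'a set set \<Rightarrow> 'a set set \<Rightarrow> 'a set" where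
  "Vregion P S \<F> \<N> = {x \<in> affine hull P.
      (\<forall>F \<in> \<N> \<union> {S}. x \<in> Hminus P F) \<and>
      (\<forall>F \<in> \<F>. x \<in> affine hull F) \<and>
      (\<forall>F. F facet_of P \<and> F \<notin> \<N> \<union> \<F> \<union> {S} \<longrightarrow> x \<in> Hplus P F)}"

definition pseudo_stacking ::
  "'a::euclidean_space set \<Rightarrow> 'a set \<Rightarrow> 'a set set \<Rightarrow> 'a set set \<Rightarrow> 'a \<Rightarrow> 'a set \<Rightarrow> bool" where
  "pseudo_stacking P' S' \<F>' \<N>' w Q \<longleftrightarrow>
     polytope P' \<and> simplex_facet P' S' \<and> \<F>' \<subseteq> adj P' S' \<and> \<N>' \<subseteq> adj P' S' \<and>
     \<F>' \<inter> \<N>' = {} \<and> w \<in> Vregion P' S' \<F>' \<N>' \<and> Q = convex hull (insert w P')"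

end

theory Submission
  imports Defs
begin

(* Call a facet F of P beneath, on or beyond the point v according as v lies in the open side
   H_F^+, in the hyperplane H_F, or in H_F^-.  A facet G of Q = conv (P u {v}) is cut out by a
   hyperplane H supporting Q, and K = P n H is a face of P.  If v is strictly on the side of P,
   then G = K is a facet of P beneath v.  Otherwise G = conv (K u {v}), and K is either a facet
   whose hyperplane contains v, or a ridge F1 n F2 with F1 beyond and F2 beneath v: from a
   relative interior point of K one could otherwise move inside P n H towards or away from v,
   which would put v into aff K.  Conversely, each such set is cut out of Q by the facet
   hyperplane itself, or by the positive combination of the two facet inequalities of the ridge
   that vanishes at v.  Membership of v in V_S(\<F>,\<N>;P) says exactly that S and the facets in
   \<N> are beyond v, those in \<F> are on v and all others are beneath v; this turns the
   classification into (a)-(d), and (1) holds because the relative interior of a facet beyond v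
   is interior to Q.  For (d), every facet of F \<in> \<F> is F n G for another facet G, and inside
   aff F the point v lies on the same side of F n G as of G; nonsimplicity rules out G \<in> \<F>,
   since S n F n G would be a common (d-3)-face. *)

section \<open>Supporting hyperplanes and convex hulls\<close>

lemma hyperplane_through_Int_hyperplanes:
  fixes c1 c2 c :: "'a::euclidean_space"
  assumes y: "c1 \<bullet> y = d1" "c2 \<bullet> y = d2"
    and sub: "\<And>x. c1 \<bullet> x = d1 \<Longrightarrow> c2 \<bullet> x = d2 \<Longrightarrow> c \<bullet> x = d"
  obtains \<alpha> \<beta> where "c = \<alpha> *\<^sub>R c1 + \<beta> *\<^sub>R c2" "d = \<alpha> * d1 + \<beta> * d2"
proof -
  obtain p z where p: "p \<in> span {c1, c2}" and z: "\<And>w. w \<in> span {c1, c2} \<Longrightarrow> orthogonal z w"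
    and c: "c = p + z"
    using orthogonal_subspace_decomp_exists by blast
  have "c1 \<bullet> z = 0" "c2 \<bullet> z = 0"
    using z[of c1] z[of c2] by (auto simp: span_base orthogonal_def inner_commute)
  then have "c \<bullet> (y + z) = d"
    using y by (intro sub) (auto simp: inner_add_right)
  moreover have cy: "c \<bullet> y = d"
    using y by (intro sub)
  ultimately have "c \<bullet> z = 0"
    by (simp add: inner_add_right)
  moreover have "p \<bullet> z = 0"
    using z[OF p] by (simp add: orthogonal_def inner_commute)
  ultimately have "z = 0"
    using c by (simp add: inner_add_left)
  then have "c \<in> span {c1, c2}"
    using c p by simp
  then obtain \<alpha> \<beta> where e: "c = \<alpha> *\<^sub>R c1 + \<beta> *\<^sub>R c2"
    by (auto simp: span_breakdown_eq span_singleton) (metis add.commute diff_eq_eq)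
  moreover have "d = \<alpha> * d1 + \<beta> * d2"
    using cy y e by (simp add: inner_add_left)
  ultimately show thesis
    by (rule that)
qed

lemma face_of_aff_dim_ge_imp_eq:
  assumes "convex L" "K face_of L" "aff_dim L \<le> aff_dim K"
  shows "K = L"
  using face_of_aff_dim_lt[OF assms(1,2)] assms(3) by force

lemma facet_of_subset_imp_eq:
  assumes "F facet_of S" "G facet_of S" "F \<subseteq> G"
  shows "F = G"
proof (rule face_of_aff_dim_ge_imp_eq)
  show "convex G"
    using assms(2) facet_of_imp_face_of face_of_imp_convex by blast
  show "F face_of G"
    using assms by (meson face_of_subset facet_of_imp_face_of facet_of_imp_subset)
  show "aff_dim G \<le> aff_dim F"
    using assms(1,2) by (simp add: facet_of_def)
qed

lemma facet_of_Int_supporting_hyperplane_le: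
  assumes "convex Q" "Q \<subseteq> {x. a \<bullet> x \<le> b}" "Q \<inter> {x. a \<bullet> x = b} \<noteq> {}"
    and "aff_dim (Q \<inter> {x. a \<bullet> x = b}) = aff_dim Q - 1"
  shows "(Q \<inter> {x. a \<bullet> x = b}) facet_of Q"
proof -
  have "(Q \<inter> {x. a \<bullet> x = b}) face_of Q"
    using face_of_Int_supporting_hyperplane_le[OF assms(1)] assms(2) by blast
  with assms(3,4) show ?thesis
    by (simp add: facet_of_def)
qed

lemma polytope_convex_hull_insert:
  assumes "polytope P"
  shows "polytope (convex hull (insert v P))"
proof -
  obtain V where "finite V" "P = convex hull V"
    using assms unfolding polytope_def by blast
  then have "convex hull (insert v P) = convex hull (insert v V)"
    by (simp add: hull_insert[of convex v V])
  then show ?thesis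
    using \<open>finite V\<close> by (simp add: polytope_convex_hull)
qed

lemma convex_hull_insert_subset_halfspace_le:
  assumes "P \<subseteq> {x. a \<bullet> x \<le> b}" "a \<bullet> v \<le> b"
  shows "convex hull (insert v P) \<subseteq> {x. a \<bullet> x \<le> b}"
  using assms by (intro hull_minimal) (auto simp: convex_halfspace_le)

lemma convex_hull_insert_Int_hyperplane_beneath:
  fixes P :: "'a::euclidean_space set"
  assumes "convex P" "P \<subseteq> {x. a \<bullet> x \<le> b}" "a \<bullet> v < b"
  shows "convex hull (insert v P) \<inter> {x. a \<bullet> x = b} = P \<inter> {x. a \<bullet> x = b}"
proof (cases "P = {}")
  case False
  show ?thesis
  proof (intro equalityI subsetI)
    fix x assume "x \<in> convex hull (insert v P) \<inter> {x. a \<bullet> x = b}"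
    then obtain u w p where uw: "u \<ge> 0" "w \<ge> 0" "u + w = 1" "p \<in> P" "x = u *\<^sub>R v + w *\<^sub>R p"
      and ax: "a \<bullet> x = b"
      using convex_hull_insert[OF False] convex_hull_eq[of P] \<open>convex P\<close> by auto
    have "u * (a \<bullet> v) + w * (a \<bullet> p) = (u + w) * b"
      using uw ax by (simp add: algebra_simps)
    moreover have "w * (a \<bullet> p) \<le> w * b"
      using assms(2) uw by (auto intro: mult_left_mono)
    ultimately have "u = 0"
      using assms(3) uw by (smt (verit) mult_strict_left_mono distrib_right)
    then show "x \<in> P \<inter> {x. a \<bullet> x = b}"
      using uw ax by simp
  qed (simp add: hull_inc)
qed (use assms(3) in auto)

lemma convex_hull_insert_Int_hyperplane_on:
  fixes P :: "'a::euclidean_space set"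
  assumes "convex P" "P \<subseteq> {x. a \<bullet> x \<le> b}" "a \<bullet> v = b"
  shows "convex hull (insert v P) \<inter> {x. a \<bullet> x = b} = convex hull (insert v (P \<inter> {x. a \<bullet> x = b}))"
proof (cases "P = {}")
  case False
  show ?thesis
  proof (intro equalityI subsetI)
    fix x assume "x \<in> convex hull (insert v P) \<inter> {x. a \<bullet> x = b}"
    then obtain u w p where uw: "u \<ge> 0" "w \<ge> 0" "u + w = 1" "p \<in> P" "x = u *\<^sub>R v + w *\<^sub>R p"
      and ax: "a \<bullet> x = b"
      using convex_hull_insert[OF False] convex_hull_eq[of P] \<open>convex P\<close> by auto
    show "x \<in> convex hull (insert v (P \<inter> {x. a \<bullet> x = b}))"
    proof (cases "w = 0")
      case True
      then show ?thesis
        using uw by (simp add: hull_inc)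
    next
      case False
      have "u * b + w * (a \<bullet> p) = (u + w) * b"
        using uw ax assms(3) by (simp add: inner_add_right)
      then have "w * (a \<bullet> p) = w * b"
        by (simp add: distrib_right)
      then have "p \<in> P \<inter> {x. a \<bullet> x = b}"
        using False uw by simp
      then show ?thesis
        unfolding uw(5) by (intro convexD[OF convex_convex_hull] hull_inc) (use uw in auto)
    qed
  next
    fix x assume "x \<in> convex hull (insert v (P \<inter> {x. a \<bullet> x = b}))"
    moreover have "convex hull (insert v (P \<inter> {x. a \<bullet> x = b})) \<subseteq> {x. a \<bullet> x = b}"
      using assms(3) by (intro hull_minimal) (auto simp: convex_hyperplane)
    ultimately show "x \<in> convex hull (insert v P) \<inter> {x. a \<bullet> x = b}"
      using hull_mono[of "insert v (P \<inter> {x. a \<bullet> x = b})" "insert v P"] by blast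
  qed
qed (simp add: assms(3))

lemma halfspaces_move_inside:
  fixes c :: "'i \<Rightarrow> 'a::euclidean_space"
  assumes "finite I" and r: "\<And>i. i \<in> I \<Longrightarrow> c i \<bullet> r \<le> d i"
    and tight: "\<And>i. i \<in> I \<Longrightarrow> c i \<bullet> r = d i \<Longrightarrow> c i \<bullet> w \<le> 0"
  obtains t where "t > 0" "\<And>i. i \<in> I \<Longrightarrow> c i \<bullet> (r + t *\<^sub>R w) \<le> d i"
proof -
  have ev: "\<forall>\<^sub>F t in at_right 0. c i \<bullet> (r + t *\<^sub>R w) \<le> d i" if i: "i \<in> I" for i
  proof (cases "c i \<bullet> r = d i")
    case True
    have step: "c i \<bullet> (r + t *\<^sub>R w) \<le> d i" if "t > 0" for t :: real
    proof -
      have "t * (c i \<bullet> w) \<le> 0"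
        using tight[OF i True] that by (simp add: mult_nonneg_nonpos)
      then show ?thesis
        using True by (simp add: inner_add_right)
    qed
    show ?thesis
      using eventually_mono[OF eventually_at_right_less step] .
  next
    case False
    then have less: "c i \<bullet> r < d i"
      using r[OF i] by simp
    have "((\<lambda>t. c i \<bullet> (r + t *\<^sub>R w)) \<longlongrightarrow> c i \<bullet> (r + 0 *\<^sub>R w)) (at_right 0)"
      by (intro tendsto_intros)
    then have "\<forall>\<^sub>F t in at_right 0. c i \<bullet> (r + t *\<^sub>R w) < d i"
      using less by (intro order_tendstoD(2)) simp_all
    then show ?thesis
      by (rule eventually_mono) simp
  qed
  have "\<forall>\<^sub>F t in at_right 0. \<forall>i\<in>I. c i \<bullet> (r + t *\<^sub>R w) \<le> d i"
    by (intro eventually_ball_finite \<open>finite I\<close> ballI ev)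
  then have "\<forall>\<^sub>F t in at_right 0. 0 < t \<and> (\<forall>i\<in>I. c i \<bullet> (r + t *\<^sub>R w) \<le> d i)"
    by (rule eventually_conj[OF eventually_at_right_less])
  then obtain t where "0 < t \<and> (\<forall>i\<in>I. c i \<bullet> (r + t *\<^sub>R w) \<le> d i)"
    using eventually_happens'[OF trivial_limit_at_right_real] by blast
  then show thesis
    using that by blast
qed

lemma reflection_notin_affine_hull:
  assumes "r \<in> S" and "v \<notin> affine hull S"
  shows "r + (r - v) \<notin> affine hull S"
proof
  assume "r + (r - v) \<in> affine hull S"
  then have "(2::real) *\<^sub>R r + (- 1) *\<^sub>R (r + (r - v)) \<in> affine hull S"
    by (intro mem_affine[OF affine_affine_hull hull_inc[OF \<open>r \<in> S\<close>]]) simp_all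
  moreover have "(2::real) *\<^sub>R r + (- 1) *\<^sub>R (r + (r - v)) = v"
    by (simp add: algebra_simps scaleR_2)
  ultimately show False
    using \<open>v \<notin> affine hull S\<close> by metis
qed

section \<open>Facets of a full-dimensional polytope\<close>

locale full_dim_polytope =
  fixes P :: "'a::euclidean_space set"
  assumes polytope_P: "polytope P" and aff_dim_P: "aff_dim P = DIM('a)"
begin

lemma affine_hull_P: "affine hull P = UNIV"
  using aff_dim_P aff_dim_eq_full by blast

lemma convex_P: "convex P"
  by (simp add: polytope_P polytope_imp_convex)

lemma polyhedron_P: "polyhedron P"
  by (simp add: polytope_P polytope_imp_polyhedron)

lemma aff_dim_facet: "F facet_of P \<Longrightarrow> aff_dim F = int DIM('a) - 1"
  by (simp add: facet_of_def aff_dim_P)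

lemma convex_facet: "F facet_of P \<Longrightarrow> convex F"
  using face_of_imp_convex facet_of_imp_face_of by blast

lemma not_subset_hyperplane: "a \<noteq> 0 \<Longrightarrow> \<not> P \<subseteq> {x. a \<bullet> x = b}"
  using aff_dim_subset[of P "{x. a \<bullet> x = b}"] aff_dim_P by auto

lemma facet_eq_if_affine_hull_eq:
  assumes "F facet_of P" "G facet_of P" "affine hull F = affine hull G"
  shows "F = G"
  using assms face_of_imp_eq_affine_Int[OF convex_P] facet_of_imp_face_of by metis

lemma adjacent_facetsD:
  assumes "adjacent_facets P F G"
  shows "F facet_of P" "G facet_of P" "aff_dim (F \<inter> G) = int DIM('a) - 2"
  using assms aff_dim_P by (auto simp: adjacent_facets_def)

lemma not_adj_self: "S \<notin> adj P S"
proof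
  assume "S \<in> adj P S"
  then have "S facet_of P" "aff_dim S = aff_dim P - 2"
    by (simp_all add: adj_def adjacent_facets_def)
  then show False
    by (simp add: facet_of_def)
qed

(* The outward counterpart of facet_ineq, with F cut out of P explicitly. *)
definition exposing_halfspace :: "'a set \<Rightarrow> 'a \<Rightarrow> real \<Rightarrow> bool" where
  "exposing_halfspace F a b \<longleftrightarrow> a \<noteq> 0 \<and> P \<subseteq> {x. a \<bullet> x \<le> b} \<and> F = P \<inter> {x. a \<bullet> x = b}"

lemma exposing_halfspace_exists:
  assumes "F facet_of P"
  obtains a b where "exposing_halfspace F a b"
  using facet_of_polyhedron[OF polyhedron_P assms] unfolding exposing_halfspace_def by metis

lemma affine_hull_facet:
  assumes F: "F facet_of P" and h: "exposing_halfspace F a b"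
  shows "affine hull F = {x. a \<bullet> x = b}"
proof -
  have sub: "affine hull F \<subseteq> {x. a \<bullet> x = b}"
    using h unfolding exposing_halfspace_def by (intro hull_minimal) (auto simp: affine_hyperplane)
  have "aff_dim (affine hull F) = aff_dim {x. a \<bullet> x = b}"
    using h aff_dim_facet[OF F] by (simp add: exposing_halfspace_def)
  then show ?thesis
    using aff_dim_eq_full_gen[OF sub] by (simp add: affine_hyperplane)
qed

lemma exposing_halfspace_unique:
  assumes F: "F facet_of P" and h: "exposing_halfspace F a b" and h': "exposing_halfspace F a' b'"
  obtains l where "l > 0" "a' = l *\<^sub>R a" "b' = l * b"
proof -
  obtain y where "y \<in> F"
    using F by (auto simp: facet_of_def)
  then have y: "a \<bullet> y = b"
    using h by (auto simp: exposing_halfspace_def)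
  have "{x. a \<bullet> x = b} = {x. a' \<bullet> x = b'}"
    using affine_hull_facet[OF F h] affine_hull_facet[OF F h'] by simp
  then obtain \<alpha> \<beta> where "a' = \<alpha> *\<^sub>R a + \<beta> *\<^sub>R a" "b' = \<alpha> * b + \<beta> * b"
    using hyperplane_through_Int_hyperplanes[of a y b a b a' b'] y by blast
  then have l: "a' = (\<alpha> + \<beta>) *\<^sub>R a" "b' = (\<alpha> + \<beta>) * b"
    by (simp_all add: algebra_simps)
  obtain p where p: "p \<in> P" "a \<bullet> p < b"
    using h not_subset_hyperplane[of a b] unfolding exposing_halfspace_def by force
  have "(\<alpha> + \<beta>) * (a \<bullet> p) \<le> (\<alpha> + \<beta>) * b"
    using h' p l by (auto simp: exposing_halfspace_def)
  then have "\<alpha> + \<beta> \<ge> 0"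
    using p(2) by (smt (verit) mult_le_cancel_left)
  moreover have "\<alpha> + \<beta> \<noteq> 0"
    using h' l by (auto simp: exposing_halfspace_def)
  ultimately have "\<alpha> + \<beta> > 0"
    by simp
  then show thesis
    using that l by blast
qed

lemma facet_ineq_iff_exposing_halfspace:
  assumes F: "F facet_of P"
  shows "facet_ineq P F a b \<longleftrightarrow> exposing_halfspace F (- a) (- b)"
proof
  assume "facet_ineq P F a b"
  moreover have "F = affine hull F \<inter> P"
    using face_of_imp_eq_affine_Int[OF convex_P] F facet_of_imp_face_of by blast
  ultimately show "exposing_halfspace F (- a) (- b)"
    unfolding exposing_halfspace_def facet_ineq_def affine_hull_P by auto
next
  assume h: "exposing_halfspace F (- a) (- b)"
  then show "facet_ineq P F a b"
    using affine_hull_facet[OF F h] unfolding exposing_halfspace_def facet_ineq_def affine_hull_P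
    by auto
qed

lemma facet_side_iff:
  assumes F: "F facet_of P" and h: "exposing_halfspace F a b"
  shows "x \<in> Hminus P F \<longleftrightarrow> b < a \<bullet> x"
    and "x \<in> Hplus P F \<longleftrightarrow> a \<bullet> x < b"
    and "x \<in> affine hull F \<longleftrightarrow> a \<bullet> x = b"
proof -
  have proportional: "\<exists>l>0. a = l *\<^sub>R (- a') \<and> b = l * (- b')" if "facet_ineq P F a' b'" for a' b'
    using that facet_ineq_iff_exposing_halfspace[OF F]
    by (metis exposing_halfspace_unique[OF F] h)
  have ineq: "facet_ineq P F (- a) (- b)"
    using facet_ineq_iff_exposing_halfspace[OF F] h by simp
  show "x \<in> Hminus P F \<longleftrightarrow> b < a \<bullet> x"
  proof
    assume "x \<in> Hminus P F"
    then obtain a' b' where "facet_ineq P F a' b'" "a' \<bullet> x < b'"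
      unfolding Hminus_def by auto
    then show "b < a \<bullet> x"
      using proportional by fastforce
  qed (use ineq in \<open>auto simp: Hminus_def affine_hull_P intro!: exI[of _ "- a"] exI[of _ "- b"]\<close>)
  show "x \<in> Hplus P F \<longleftrightarrow> a \<bullet> x < b"
  proof
    assume "x \<in> Hplus P F"
    then obtain a' b' where "facet_ineq P F a' b'" "a' \<bullet> x > b'"
      unfolding Hplus_def by auto
    then show "a \<bullet> x < b"
      using proportional by fastforce
  qed (use ineq in \<open>auto simp: Hplus_def affine_hull_P intro!: exI[of _ "- a"] exI[of _ "- b"]\<close>)
  show "x \<in> affine hull F \<longleftrightarrow> a \<bullet> x = b"
    using affine_hull_facet[OF F h] by auto
qed

lemma facet_side_cases:
  assumes "F facet_of P"
  obtains "x \<in> Hminus P F" | "x \<in> affine hull F" | "x \<in> Hplus P F"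
proof -
  obtain a b where h: "exposing_halfspace F a b"
    using exposing_halfspace_exists[OF assms] by blast
  have "b < a \<bullet> x \<or> a \<bullet> x = b \<or> a \<bullet> x < b"
    by linarith
  then show thesis
    using that facet_side_iff[OF assms h] by blast
qed

lemma facet_sides_disjoint:
  assumes "F facet_of P"
  shows "x \<in> Hminus P F \<Longrightarrow> x \<notin> affine hull F"
    and "x \<in> Hplus P F \<Longrightarrow> x \<notin> affine hull F"
    and "x \<in> Hminus P F \<Longrightarrow> x \<notin> Hplus P F"
proof -
  obtain a b where "exposing_halfspace F a b"
    using exposing_halfspace_exists[OF assms] by blast
  then show "x \<in> Hminus P F \<Longrightarrow> x \<notin> affine hull F"
    and "x \<in> Hplus P F \<Longrightarrow> x \<notin> affine hull F"
    and "x \<in> Hminus P F \<Longrightarrow> x \<notin> Hplus P F"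
    using facet_side_iff[OF assms] by auto
qed

lemma exposing_halfspace_through_rel_interior:
  assumes F: "F facet_of P" and x: "x \<in> rel_interior F"
    and "c \<noteq> 0" and P: "P \<subseteq> {y. c \<bullet> y \<le> c \<bullet> x}"
  shows "exposing_halfspace F c (c \<bullet> x)"
proof -
  define K where "K = P \<inter> {y. c \<bullet> y = c \<bullet> x}"
  have Kf: "K face_of P"
    unfolding K_def using face_of_Int_supporting_hyperplane_le[OF convex_P] P by blast
  have "x \<in> F"
    using x rel_interior_subset by blast
  then have "F \<subseteq> K"
    using subset_of_face_of[OF Kf facet_of_imp_subset[OF F]] x F facet_of_imp_subset
    unfolding K_def by blast
  then have "F face_of K"
    using face_of_subset[OF facet_of_imp_face_of[OF F]] K_def by blast
  moreover have "K \<noteq> P"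
    using not_subset_hyperplane[OF \<open>c \<noteq> 0\<close>] K_def by blast
  then have "aff_dim K \<le> aff_dim F"
    using face_of_aff_dim_lt[OF convex_P Kf] aff_dim_P aff_dim_facet[OF F] by simp
  ultimately have "F = K"
    using face_of_aff_dim_ge_imp_eq face_of_imp_convex[OF Kf] by blast
  then show ?thesis
    using P \<open>c \<noteq> 0\<close> by (simp add: exposing_halfspace_def K_def)
qed

lemma mem_P_iff_exposing_halfspaces:
  assumes h: "\<And>F. F facet_of P \<Longrightarrow> exposing_halfspace F (a F) (b F)"
  shows "x \<in> P \<longleftrightarrow> (\<forall>F. F facet_of P \<longrightarrow> a F \<bullet> x \<le> b F)"
proof
  show "x \<in> P \<Longrightarrow> \<forall>F. F facet_of P \<longrightarrow> a F \<bullet> x \<le> b F"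
    using h by (auto simp: exposing_halfspace_def)
  assume x: "\<forall>F. F facet_of P \<longrightarrow> a F \<bullet> x \<le> b F"
  obtain H where "finite H" and seq: "P = affine hull P \<inter> \<Inter>H"
    and "\<And>h. h \<in> H \<Longrightarrow> \<exists>c d. c \<noteq> 0 \<and> h = {x. c \<bullet> x \<le> d}"
    and min: "\<And>H'. H' \<subset> H \<Longrightarrow> P \<subset> affine hull P \<inter> \<Inter>H'"
    using polyhedron_P by (simp add: polyhedron_Int_affine_minimal) meson
  then obtain c d where cd: "\<And>h. h \<in> H \<Longrightarrow> c h \<noteq> 0 \<and> h = {x. c h \<bullet> x \<le> d h}"
    by metis
  have "x \<in> h" if "h \<in> H" for h
  proof -
    define F where "F = P \<inter> {x. c h \<bullet> x = d h}"
    have F: "F facet_of P"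
      unfolding F_def using facet_of_polyhedron_explicit[OF \<open>finite H\<close> seq cd min] that by blast
    have "exposing_halfspace F (c h) (d h)"
      using cd seq that unfolding F_def exposing_halfspace_def by blast
    then obtain l where "l > 0" "a F = l *\<^sub>R c h" "b F = l * d h"
      using exposing_halfspace_unique[OF F _ h[OF F]] by blast
    moreover have "a F \<bullet> x \<le> b F"
      using x F by blast
    ultimately have "c h \<bullet> x \<le> d h"
      by simp
    then show "x \<in> h"
      using cd[OF that] by blast
  qed
  then show "x \<in> P"
    using seq affine_hull_P by auto
qed

lemma step_into_polytope:
  assumes "r \<in> P"
    and tight: "\<And>F a b. F facet_of P \<Longrightarrow> exposing_halfspace F a b \<Longrightarrow> r \<in> F \<Longrightarrow> a \<bullet> w \<le> 0"
  obtains t where "t > 0" "r + t *\<^sub>R w \<in> P"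
proof -
  have "\<forall>F. \<exists>a b. F facet_of P \<longrightarrow> exposing_halfspace F a b"
    using exposing_halfspace_exists by blast
  then obtain n m where h: "\<And>F. F facet_of P \<Longrightarrow> exposing_halfspace F (n F) (m F)"
    by metis
  note mem_P = mem_P_iff_exposing_halfspaces[OF h]
  have "n F \<bullet> r \<le> m F" if "F facet_of P" for F
    using \<open>r \<in> P\<close> mem_P that by blast
  moreover have "n F \<bullet> w \<le> 0" if "F facet_of P" "n F \<bullet> r = m F" for F
    using tight[OF that(1) h[OF that(1)]] h[OF that(1)] that(2) \<open>r \<in> P\<close>
    by (auto simp: exposing_halfspace_def)
  ultimately obtain t where "t > 0" "\<And>F. F facet_of P \<Longrightarrow> n F \<bullet> (r + t *\<^sub>R w) \<le> m F"
    using halfspaces_move_inside[of "{F. F facet_of P}" n r m w]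
      finite_polytope_facets[OF polytope_P] by auto
  then show thesis
    using that mem_P by blast
qed

lemma exposed_subset_if_positive_combination:
  assumes K: "exposing_halfspace K c d" and F: "exposing_halfspace F c1 d1"
    and P: "P \<subseteq> {x. c2 \<bullet> x \<le> d2}"
    and c: "c = \<mu> *\<^sub>R c1 + \<nu> *\<^sub>R c2" "d = \<mu> * d1 + \<nu> * d2" and "\<mu> > 0" "\<nu> \<ge> 0"
  shows "K \<subseteq> F"
proof
  fix x assume "x \<in> K"
  then have x: "x \<in> P" "\<mu> * (c1 \<bullet> x - d1) + \<nu> * (c2 \<bullet> x - d2) = 0"
    using K c by (auto simp: exposing_halfspace_def algebra_simps)
  have "c1 \<bullet> x \<le> d1" "c2 \<bullet> x \<le> d2"
    using x(1) F P by (auto simp: exposing_halfspace_def)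
  then have "c1 \<bullet> x = d1"
    using x(2) \<open>\<mu> > 0\<close> \<open>\<nu> \<ge> 0\<close>
    by (smt (verit) mult_nonneg_nonpos mult_pos_neg)
  then show "x \<in> F"
    using x(1) F by (auto simp: exposing_halfspace_def)
qed

lemma nonpos_combination_not_exposing:
  assumes K: "exposing_halfspace K c d"
    and P: "P \<subseteq> {x. c1 \<bullet> x \<le> d1}" "P \<subseteq> {x. c2 \<bullet> x \<le> d2}"
    and c: "c = \<alpha> *\<^sub>R c1 + \<beta> *\<^sub>R c2" "d = \<alpha> * d1 + \<beta> * d2" and "\<alpha> \<le> 0" "\<beta> \<le> 0"
  shows False
proof -
  have "c \<bullet> x \<ge> d" if "x \<in> P" for x
  proof -
    have "c \<bullet> x - d = \<alpha> * (c1 \<bullet> x - d1) + \<beta> * (c2 \<bullet> x - d2)"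
      using c by (simp add: algebra_simps)
    moreover have "c1 \<bullet> x \<le> d1" "c2 \<bullet> x \<le> d2"
      using that P by auto
    ultimately show ?thesis
      using \<open>\<alpha> \<le> 0\<close> \<open>\<beta> \<le> 0\<close> by (smt (verit) mult_nonpos_nonpos)
  qed
  then have "P \<subseteq> {x. c \<bullet> x = d}"
    using K by (force simp: exposing_halfspace_def)
  then show False
    using K not_subset_hyperplane by (auto simp: exposing_halfspace_def)
qed

lemma facet_eq_if_positive_coefficient:
  assumes K: "K facet_of P" and hK: "exposing_halfspace K e f"
    and F: "F facet_of P" and hF: "exposing_halfspace F a b" and P: "P \<subseteq> {x. c \<bullet> x \<le> d}"
    and e: "e = \<alpha> *\<^sub>R a + \<beta> *\<^sub>R c" "f = \<alpha> * b + \<beta> * d" and "\<alpha> > 0"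
  shows "K = F"
proof (cases "\<beta> \<ge> 0")
  case True
  then have "K \<subseteq> F"
    using exposed_subset_if_positive_combination[OF hK hF P e \<open>\<alpha> > 0\<close>] by simp
  then show ?thesis
    using facet_of_subset_imp_eq[OF K F] by blast
next
  case False
  have a: "a = (1 / \<alpha>) *\<^sub>R e + (- \<beta> / \<alpha>) *\<^sub>R c" "b = (1 / \<alpha>) * f + (- \<beta> / \<alpha>) * d"
    using e \<open>\<alpha> > 0\<close> by (auto simp: field_simps)
  have "- \<beta> / \<alpha> \<ge> 0"
    using False \<open>\<alpha> > 0\<close> by (intro divide_nonneg_pos) auto
  then have "F \<subseteq> K"
    using exposed_subset_if_positive_combination[OF hF hK P a] \<open>\<alpha> > 0\<close> by simp
  then show ?thesis
    using facet_of_subset_imp_eq[OF F K] by blast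
qed

end

section \<open>Ridges\<close>

context full_dim_polytope
begin

lemma affine_hull_ridge:
  assumes F: "F facet_of P" and G: "G facet_of P" and "F \<noteq> G"
    and dim: "aff_dim (F \<inter> G) = int DIM('a) - 2"
    and hF: "exposing_halfspace F a b" and hG: "exposing_halfspace G c d"
  shows "affine hull (F \<inter> G) = {x. a \<bullet> x = b} \<inter> {x. c \<bullet> x = d}"
proof -
  let ?H = "{x. a \<bullet> x = b} \<inter> {x. c \<bullet> x = d}"
  have sub: "affine hull (F \<inter> G) \<subseteq> ?H"
    using hull_mono[of "F \<inter> G" F] hull_mono[of "F \<inter> G" G]
      affine_hull_facet[OF F hF] affine_hull_facet[OF G hG] by blast
  have "\<not> {x. a \<bullet> x = b} \<subseteq> {x. c \<bullet> x = d}"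
  proof
    assume "{x. a \<bullet> x = b} \<subseteq> {x. c \<bullet> x = d}"
    then have "affine hull F \<subseteq> affine hull G"
      using affine_hull_facet[OF F hF] affine_hull_facet[OF G hG] by simp
    then have "affine hull F = affine hull G"
      using aff_dim_eq_full_gen[OF \<open>affine hull F \<subseteq> affine hull G\<close>]
        aff_dim_facet[OF F] aff_dim_facet[OF G] by simp
    then show False
      using facet_eq_if_affine_hull_eq[OF F G] \<open>F \<noteq> G\<close> by blast
  qed
  moreover have "affine hull ?H = ?H" "affine hull {x. a \<bullet> x = b} = {x. a \<bullet> x = b}"
    by (simp_all add: affine_hyperplane affine_Int)
  ultimately have "affine hull ?H \<subset> affine hull {x. a \<bullet> x = b}"
    by blast
  then have "aff_dim ?H < aff_dim {x. a \<bullet> x = b}"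
    by (rule aff_dim_psubset)
  then have "aff_dim ?H < int DIM('a) - 1"
    using hF by (simp add: exposing_halfspace_def)
  moreover have "aff_dim (affine hull (F \<inter> G)) \<le> aff_dim ?H"
    using sub by (rule aff_dim_subset)
  ultimately have "aff_dim (affine hull (F \<inter> G)) = aff_dim ?H"
    using dim by simp
  then show ?thesis
    using aff_dim_eq_full_gen[OF sub] by (simp add: affine_hyperplane affine_Int)
qed

lemma facet_containing_ridge:
  assumes "DIM('a) \<ge> 2" and F: "F facet_of P" and G: "G facet_of P" and "F \<noteq> G"
    and dim: "aff_dim (F \<inter> G) = int DIM('a) - 2"
    and K: "K facet_of P" and "F \<inter> G \<subseteq> K"
  shows "K = F \<or> K = G"
proof -
  obtain a b c d e f where hF: "exposing_halfspace F a b" and hG: "exposing_halfspace G c d"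
    and hK: "exposing_halfspace K e f"
    using exposing_halfspace_exists F G K by metis
  have hP: "P \<subseteq> {x. a \<bullet> x \<le> b}" "P \<subseteq> {x. c \<bullet> x \<le> d}"
    using hF hG by (auto simp: exposing_halfspace_def)
  have "F \<inter> G \<noteq> {}"
    using dim \<open>DIM('a) \<ge> 2\<close> by auto
  then obtain y where "y \<in> F \<inter> G"
    by blast
  then have y: "a \<bullet> y = b" "c \<bullet> y = d"
    using hF hG by (auto simp: exposing_halfspace_def)
  have "affine hull (F \<inter> G) \<subseteq> affine hull K"
    using \<open>F \<inter> G \<subseteq> K\<close> by (rule hull_mono)
  then have "\<And>x. a \<bullet> x = b \<Longrightarrow> c \<bullet> x = d \<Longrightarrow> e \<bullet> x = f"
    using affine_hull_ridge[OF F G \<open>F \<noteq> G\<close> dim hF hG] affine_hull_facet[OF K hK] by blast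
  then obtain \<alpha> \<beta> where e: "e = \<alpha> *\<^sub>R a + \<beta> *\<^sub>R c" "f = \<alpha> * b + \<beta> * d"
    using hyperplane_through_Int_hyperplanes y by metis
  then have e': "e = \<beta> *\<^sub>R c + \<alpha> *\<^sub>R a" "f = \<beta> * d + \<alpha> * b"
    by (simp_all add: algebra_simps)
  consider "\<alpha> > 0" | "\<beta> > 0" | "\<alpha> \<le> 0" "\<beta> \<le> 0"
    by linarith
  then show ?thesis
  proof cases
    case 1
    then show ?thesis
      using facet_eq_if_positive_coefficient[OF K hK F hF hP(2) e] by blast
  next
    case 2
    then show ?thesis
      using facet_eq_if_positive_coefficient[OF K hK G hG hP(1) e'] by blast
  next
    case 3
    then show ?thesis
      using nonpos_combination_not_exposing[OF hK hP e] by simp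
  qed
qed

lemma aff_dim_Int_facets_less:
  assumes F: "F facet_of P" and G: "G facet_of P" and "F \<noteq> G"
  shows "aff_dim (F \<inter> G) < int DIM('a) - 1"
proof -
  have "(F \<inter> G) face_of P"
    using F G face_of_Int facet_of_imp_face_of by blast
  then have "(F \<inter> G) face_of F"
    using face_of_subset F facet_of_imp_subset by blast
  moreover have "F \<inter> G \<noteq> F"
    using facet_of_subset_imp_eq[OF F G] \<open>F \<noteq> G\<close> by blast
  ultimately show ?thesis
    using face_of_aff_dim_lt[OF convex_facet[OF F]] aff_dim_facet[OF F] by simp
qed

lemma ridge_facet_of_facets:
  assumes "adjacent_facets P F G" and "DIM('a) \<ge> 2"
  shows "(F \<inter> G) facet_of F" and "(F \<inter> G) facet_of G"
proof -
  note FG = adjacent_facetsD[OF assms(1)]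
  have "(F \<inter> G) face_of P"
    using FG face_of_Int facet_of_imp_face_of by blast
  then have "(F \<inter> G) face_of F" "(F \<inter> G) face_of G"
    using face_of_subset FG facet_of_imp_subset by blast+
  moreover have "F \<inter> G \<noteq> {}"
    using FG(3) \<open>DIM('a) \<ge> 2\<close> by auto
  ultimately show "(F \<inter> G) facet_of F" and "(F \<inter> G) facet_of G"
    using FG aff_dim_facet by (simp_all add: facet_of_def)
qed

lemma facet_of_facet_eq_Int:
  assumes F: "F facet_of P" and T: "T facet_of F"
  obtains G where "G facet_of P" "G \<noteq> F" "T = F \<inter> G"
proof -
  have TP: "T face_of P"
    using face_of_trans facet_of_imp_face_of T F by blast
  have dT: "aff_dim T = int DIM('a) - 2"
    using T aff_dim_facet[OF F] by (simp add: facet_of_def)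
  then have "T \<noteq> P"
    using aff_dim_P by auto
  then have T_eq: "T = \<Inter>{G. G facet_of P \<and> T \<subseteq> G}"
    using face_of_polyhedron[OF polyhedron_P TP] T by (simp add: facet_of_def)
  have TF: "T \<subseteq> F"
    using T facet_of_imp_subset by blast
  obtain G where G: "G facet_of P" "T \<subseteq> G" "G \<noteq> F"
  proof (rule ccontr)
    assume "\<not> thesis"
    then have "{G. G facet_of P \<and> T \<subseteq> G} = {F}"
      using F TF that by blast
    then show False
      using T_eq dT aff_dim_facet[OF F] by simp
  qed
  have "T face_of F \<inter> G"
    using face_of_subset[OF TP] TF G(2) F facet_of_imp_subset by blast
  moreover have "aff_dim (F \<inter> G) \<le> aff_dim T"
    using aff_dim_Int_facets_less[OF F G(1)] G(3) dT by simp
  ultimately have "T = F \<inter> G"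
    using face_of_aff_dim_ge_imp_eq convex_Int[OF convex_facet[OF F] convex_facet[OF G(1)]]
    by blast
  then show thesis
    using that G by blast
qed

lemma facet_ineq_Int_facet:
  assumes F: "F facet_of P" and G: "G facet_of P" and "F \<noteq> G"
    and dim: "aff_dim (F \<inter> G) = int DIM('a) - 2" and ineq: "facet_ineq P G a b"
  shows "facet_ineq F (F \<inter> G) a b"
proof -
  obtain c d where hF: "exposing_halfspace F c d"
    using exposing_halfspace_exists[OF F] by blast
  have hG: "exposing_halfspace G (- a) (- b)"
    using ineq facet_ineq_iff_exposing_halfspace[OF G] by blast
  have "affine hull (F \<inter> G) = affine hull F \<inter> {x. a \<bullet> x = b}"
    using affine_hull_ridge[OF F G \<open>F \<noteq> G\<close> dim hF hG] affine_hull_facet[OF F hF] by auto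
  moreover have "F \<subseteq> {x. a \<bullet> x \<ge> b}"
    using ineq F facet_of_imp_subset unfolding facet_ineq_def by blast
  ultimately show ?thesis
    using ineq unfolding facet_ineq_def by blast
qed

lemma Hminus_Int_facet:
  assumes "F facet_of P" "G facet_of P" "F \<noteq> G" "aff_dim (F \<inter> G) = int DIM('a) - 2"
    and "x \<in> affine hull F" "x \<in> Hminus P G"
  shows "x \<in> Hminus F (F \<inter> G)"
  using assms facet_ineq_Int_facet unfolding Hminus_def by blast

lemma Hplus_Int_facet:
  assumes "F facet_of P" "G facet_of P" "F \<noteq> G" "aff_dim (F \<inter> G) = int DIM('a) - 2"
    and "x \<in> affine hull F" "x \<in> Hplus P G"
  shows "x \<in> Hplus F (F \<inter> G)"
  using assms facet_ineq_Int_facet unfolding Hplus_def by blast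

lemma ridge_eq_Int_facets:
  assumes K: "K face_of P" and dim: "aff_dim K = int DIM('a) - 2" and r: "r \<in> rel_interior K"
    and F1: "F1 facet_of P" "r \<in> F1" and F2: "F2 facet_of P" "r \<in> F2" and "F1 \<noteq> F2"
  shows "K = F1 \<inter> F2"
proof -
  have "K \<subseteq> F1 \<inter> F2"
    using subset_of_face_of[OF facet_of_imp_face_of[OF F1(1)] face_of_imp_subset[OF K]]
      subset_of_face_of[OF facet_of_imp_face_of[OF F2(1)] face_of_imp_subset[OF K]] F1(2) F2(2) r
    by blast
  then have "K face_of F1 \<inter> F2"
    using face_of_subset[OF K] F1(1) facet_of_imp_subset by blast
  moreover have "aff_dim (F1 \<inter> F2) \<le> aff_dim K"
    using aff_dim_Int_facets_less[OF F1(1) F2(1) \<open>F1 \<noteq> F2\<close>] dim by simp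
  ultimately show ?thesis
    using face_of_aff_dim_ge_imp_eq convex_Int[OF convex_facet[OF F1(1)] convex_facet[OF F2(1)]]
    by blast
qed

lemma facet_blocking_direction:
  assumes P: "P \<subseteq> {x. a \<bullet> x \<le> b}" and K: "K = P \<inter> {x. a \<bullet> x = b}" and "r \<in> K"
    and "a \<bullet> w = 0" and "r + w \<notin> affine hull K"
  obtains F c d where "F facet_of P" "exposing_halfspace F c d" "r \<in> F" "c \<bullet> w > 0"
proof (rule ccontr)
  note found = that
  assume no_facet: "\<not> thesis"
  obtain t where "t > 0" "r + t *\<^sub>R w \<in> P"
  proof (rule step_into_polytope)
    show "r \<in> P"
      using \<open>r \<in> K\<close> K by blast
    show "c \<bullet> w \<le> 0" if "F facet_of P" "exposing_halfspace F c d" "r \<in> F" for F c d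
      using found[OF that] no_facet by force
  qed
  then have "r + t *\<^sub>R w \<in> affine hull K"
    using K \<open>r \<in> K\<close> \<open>a \<bullet> w = 0\<close> by (auto simp: inner_add_right intro: hull_inc)
  moreover have "r + w = (1 - 1 / t) *\<^sub>R r + (1 / t) *\<^sub>R (r + t *\<^sub>R w)"
    using \<open>t > 0\<close> by (simp add: algebra_simps)
  ultimately have "r + w \<in> affine hull K"
    using \<open>r \<in> K\<close> by (metis affine_affine_hull diff_add_cancel hull_inc mem_affine)
  with \<open>r + w \<notin> affine hull K\<close> show False ..
qed

lemma ridge_separating_facets:
  assumes "DIM('a) \<ge> 2" and P: "P \<subseteq> {x. a \<bullet> x \<le> b}" and "a \<bullet> v = b"
    and K: "K = P \<inter> {x. a \<bullet> x = b}" and dim: "aff_dim K = int DIM('a) - 2"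
    and "v \<notin> affine hull K"
  obtains F1 F2 where "F1 facet_of P" "F2 facet_of P" "v \<in> Hminus P F1" "v \<in> Hplus P F2"
    "K = F1 \<inter> F2"
proof -
  have Kf: "K face_of P"
    using face_of_Int_supporting_hyperplane_le[OF convex_P] P K by auto
  have "K \<noteq> {}"
    using dim \<open>DIM('a) \<ge> 2\<close> by auto
  then obtain r where r: "r \<in> rel_interior K"
    using rel_interior_eq_empty face_of_imp_convex[OF Kf] by blast
  then have rK: "r \<in> K"
    using rel_interior_subset by blast
  have "a \<bullet> (v - r) = 0" "a \<bullet> (r - v) = 0"
    using rK K \<open>a \<bullet> v = b\<close> by (simp_all add: inner_diff_right)
  moreover have "r + (v - r) \<notin> affine hull K"
    using \<open>v \<notin> affine hull K\<close> by simp
  ultimately obtain F1 c1 d1 where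
    F1: "F1 facet_of P" "exposing_halfspace F1 c1 d1" "r \<in> F1" "c1 \<bullet> (v - r) > 0"
    using facet_blocking_direction[OF P K rK] by blast
  obtain F2 c2 d2 where
    F2: "F2 facet_of P" "exposing_halfspace F2 c2 d2" "r \<in> F2" "c2 \<bullet> (r - v) > 0"
    using facet_blocking_direction[OF P K rK \<open>a \<bullet> (r - v) = 0\<close>]
      reflection_notin_affine_hull[OF rK \<open>v \<notin> affine hull K\<close>] by blast
  then have "v \<in> Hminus P F1" "v \<in> Hplus P F2"
    using F1 facet_side_iff(1)[OF F1(1,2)] facet_side_iff(2)[OF F2(1,2)]
    by (auto simp: exposing_halfspace_def inner_diff_right)
  moreover have "F1 \<noteq> F2"
    using facet_sides_disjoint(3)[OF F1(1)] \<open>v \<in> Hminus P F1\<close> \<open>v \<in> Hplus P F2\<close> by blast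
  ultimately have "K = F1 \<inter> F2"
    using ridge_eq_Int_facets[OF Kf dim r] F1(1,3) F2(1,3) by blast
  then show thesis
    using that F1(1) F2(1) \<open>v \<in> Hminus P F1\<close> \<open>v \<in> Hplus P F2\<close> by blast
qed

end

section \<open>Facets of the convex hull of a polytope and a point\<close>

context full_dim_polytope
begin

lemma P_subset_convex_hull_insert: "P \<subseteq> convex hull (insert v P)"
  using hull_subset[of "insert v P" convex] by blast

lemma aff_dim_convex_hull_insert: "aff_dim (convex hull (insert v P)) = int DIM('a)"
  using aff_dim_subset[OF P_subset_convex_hull_insert[of v]]
    aff_dim_le_DIM[of "convex hull (insert v P)"] aff_dim_P by linarith

lemma facet_of_convex_hull_insert_beneath:
  assumes F: "F facet_of P" and v: "v \<in> Hplus P F"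
  shows "F facet_of convex hull (insert v P)"
proof -
  obtain a b where h: "exposing_halfspace F a b"
    using exposing_halfspace_exists[OF F] by blast
  then have P: "P \<subseteq> {x. a \<bullet> x \<le> b}" and "a \<bullet> v < b"
    using facet_side_iff(2)[OF F h] v by (auto simp: exposing_halfspace_def)
  then have eq: "convex hull (insert v P) \<inter> {x. a \<bullet> x = b} = F"
    using convex_hull_insert_Int_hyperplane_beneath[OF convex_P] h
    by (simp add: exposing_halfspace_def)
  have "(convex hull (insert v P) \<inter> {x. a \<bullet> x = b}) facet_of convex hull (insert v P)"
  proof (rule facet_of_Int_supporting_hyperplane_le[OF convex_convex_hull])
    show "convex hull (insert v P) \<subseteq> {x. a \<bullet> x \<le> b}"
      using convex_hull_insert_subset_halfspace_le[OF P] \<open>a \<bullet> v < b\<close> by simp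
  qed (use F in \<open>simp_all add: eq aff_dim_convex_hull_insert aff_dim_facet aff_dim_P facet_of_def\<close>)
  then show ?thesis
    using eq by simp
qed

lemma facet_of_convex_hull_insert_on:
  assumes F: "F facet_of P" and v: "v \<in> affine hull F"
  shows "convex hull (insert v F) facet_of convex hull (insert v P)"
proof -
  obtain a b where h: "exposing_halfspace F a b"
    using exposing_halfspace_exists[OF F] by blast
  then have P: "P \<subseteq> {x. a \<bullet> x \<le> b}" and "a \<bullet> v = b"
    using facet_side_iff(3)[OF F h] v by (auto simp: exposing_halfspace_def)
  then have eq: "convex hull (insert v P) \<inter> {x. a \<bullet> x = b} = convex hull (insert v F)"
    using convex_hull_insert_Int_hyperplane_on[OF convex_P] h
    by (simp add: exposing_halfspace_def)
  have "aff_dim (convex hull (insert v F)) = aff_dim F"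
    using v by (simp add: aff_dim_convex_hull aff_dim_insert)
  then have "(convex hull (insert v P) \<inter> {x. a \<bullet> x = b}) facet_of convex hull (insert v P)"
  proof (intro facet_of_Int_supporting_hyperplane_le[OF convex_convex_hull])
    show "convex hull (insert v P) \<subseteq> {x. a \<bullet> x \<le> b}"
      using convex_hull_insert_subset_halfspace_le[OF P] \<open>a \<bullet> v = b\<close> by simp
  qed (use F in \<open>simp_all add: eq aff_dim_convex_hull_insert aff_dim_facet\<close>)
  then show ?thesis
    using eq by simp
qed

lemma positive_combination_exposes_Int:
  assumes hF: "exposing_halfspace F c1 d1" and hG: "exposing_halfspace G c2 d2"
    and "m1 > 0" "m2 > 0"
  defines "c \<equiv> m1 *\<^sub>R c1 + m2 *\<^sub>R c2" and "e \<equiv> m1 * d1 + m2 * d2"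
  shows "P \<subseteq> {x. c \<bullet> x \<le> e}" and "P \<inter> {x. c \<bullet> x = e} = F \<inter> G"
proof -
  have ce: "c \<bullet> x - e = m1 * (c1 \<bullet> x - d1) + m2 * (c2 \<bullet> x - d2)" for x
    by (simp add: c_def e_def algebra_simps)
  have le: "m1 * (c1 \<bullet> x - d1) \<le> 0" "m2 * (c2 \<bullet> x - d2) \<le> 0" if "x \<in> P" for x
    using that hF hG \<open>m1 > 0\<close> \<open>m2 > 0\<close> by (auto simp: exposing_halfspace_def mult_nonneg_nonpos)
  have "c \<bullet> x \<le> e" if "x \<in> P" for x
    using ce[of x] le[OF that] by linarith
  then show "P \<subseteq> {x. c \<bullet> x \<le> e}"
    by blast
  have "c \<bullet> x = e \<longleftrightarrow> c1 \<bullet> x = d1 \<and> c2 \<bullet> x = d2" if "x \<in> P" for x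
  proof -
    have "c \<bullet> x = e \<longleftrightarrow> m1 * (c1 \<bullet> x - d1) = 0 \<and> m2 * (c2 \<bullet> x - d2) = 0"
      using ce[of x] le[OF that] by linarith
    then show ?thesis
      using \<open>m1 > 0\<close> \<open>m2 > 0\<close> by simp
  qed
  then show "P \<inter> {x. c \<bullet> x = e} = F \<inter> G"
    using hF hG by (auto simp: exposing_halfspace_def)
qed

lemma facet_of_convex_hull_insert_ridge:
  assumes adj: "adjacent_facets P F G" and vF: "v \<in> Hminus P F" and vG: "v \<in> Hplus P G"
  shows "convex hull (insert v (F \<inter> G)) facet_of convex hull (insert v P)"
proof -
  note F = adjacent_facetsD(1)[OF adj] and G = adjacent_facetsD(2)[OF adj]
  obtain c1 d1 c2 d2 where h1: "exposing_halfspace F c1 d1" and h2: "exposing_halfspace G c2 d2"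
    using exposing_halfspace_exists F G by metis
  define m1 m2 where "m1 = d2 - c2 \<bullet> v" and "m2 = c1 \<bullet> v - d1"
  have m: "m1 > 0" "m2 > 0"
    using facet_side_iff(1)[OF F h1] facet_side_iff(2)[OF G h2] vF vG by (auto simp: m1_def m2_def)
  \<comment> \<open>These weights make the combined hyperplane pass through v.\<close>
  define c e where "c = m1 *\<^sub>R c1 + m2 *\<^sub>R c2" and "e = m1 * d1 + m2 * d2"
  note exposes = positive_combination_exposes_Int[OF h1 h2 m, folded c_def e_def]
  have "c \<bullet> v = e"
    by (simp add: c_def e_def m1_def m2_def algebra_simps)
  then have eq: "convex hull (insert v P) \<inter> {x. c \<bullet> x = e} = convex hull (insert v (F \<inter> G))"
    using convex_hull_insert_Int_hyperplane_on[OF convex_P exposes(1)] exposes(2) by simp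
  have "v \<notin> affine hull (F \<inter> G)"
    using hull_mono[of "F \<inter> G" F] facet_sides_disjoint(1)[OF F vF] by blast
  then have "aff_dim (convex hull (insert v (F \<inter> G))) = int DIM('a) - 1"
    using adjacent_facetsD(3)[OF adj] by (simp add: aff_dim_convex_hull aff_dim_insert)
  then have "(convex hull (insert v P) \<inter> {x. c \<bullet> x = e}) facet_of convex hull (insert v P)"
  proof (intro facet_of_Int_supporting_hyperplane_le[OF convex_convex_hull])
    show "convex hull (insert v P) \<subseteq> {x. c \<bullet> x \<le> e}"
      using convex_hull_insert_subset_halfspace_le[OF exposes(1)] \<open>c \<bullet> v = e\<close> by simp
  qed (simp_all add: eq aff_dim_convex_hull_insert)
  then show ?thesis
    using eq by simp
qed

lemma facet_of_convex_hull_insert_through_apex: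
  assumes "DIM('a) \<ge> 2" and G: "G facet_of convex hull (insert v P)"
    and Q: "convex hull (insert v P) \<subseteq> {x. a \<bullet> x \<le> b}"
    and G_eq: "G = convex hull (insert v P) \<inter> {x. a \<bullet> x = b}" and "a \<bullet> v = b"
  obtains (on) F where "F facet_of P" "v \<in> affine hull F" "G = convex hull (insert v F)"
    | (ridge) F1 F2 where "adjacent_facets P F1 F2" "v \<in> Hminus P F1" "v \<in> Hplus P F2"
        "G = convex hull (insert v (F1 \<inter> F2))"
proof -
  define K where "K = P \<inter> {x. a \<bullet> x = b}"
  have P: "P \<subseteq> {x. a \<bullet> x \<le> b}"
    using Q P_subset_convex_hull_insert by blast
  have GK: "G = convex hull (insert v K)"
    using convex_hull_insert_Int_hyperplane_on[OF convex_P P \<open>a \<bullet> v = b\<close>] G_eq K_def by simp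
  have dim_vK: "aff_dim (insert v K) = int DIM('a) - 1"
    using G GK aff_dim_convex_hull_insert[of v] by (simp add: facet_of_def aff_dim_convex_hull)
  have Kf: "K face_of P"
    using face_of_Int_supporting_hyperplane_le[OF convex_P] P K_def by blast
  have "a \<noteq> 0"
    using dim_vK \<open>a \<bullet> v = b\<close> K_def by (auto simp: aff_dim_insert affine_hull_P aff_dim_P)
  then have "K \<noteq> P"
    using not_subset_hyperplane K_def by blast
  then have "aff_dim K < int DIM('a)"
    using face_of_aff_dim_lt[OF convex_P Kf] aff_dim_P by simp
  then consider "aff_dim K = int DIM('a) - 1" "v \<in> affine hull K"
    | "aff_dim K = int DIM('a) - 2" "v \<notin> affine hull K"
    using dim_vK by (auto simp: aff_dim_insert split: if_splits)
  then show thesis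
  proof cases
    case 1
    then have "K facet_of P"
      using Kf aff_dim_P by (auto simp: facet_of_def)
    then show thesis
      using on 1 GK by blast
  next
    case 2
    then obtain F1 F2 where "F1 facet_of P" "F2 facet_of P" "v \<in> Hminus P F1" "v \<in> Hplus P F2"
      "K = F1 \<inter> F2"
      using ridge_separating_facets[OF assms(1) P \<open>a \<bullet> v = b\<close> K_def] by blast
    moreover from this have "adjacent_facets P F1 F2"
      using 2 aff_dim_P by (simp add: adjacent_facets_def)
    ultimately show thesis
      using ridge GK by blast
  qed
qed

lemma facet_of_convex_hull_insert_cases:
  assumes "DIM('a) \<ge> 2" and G: "G facet_of convex hull (insert v P)"
  obtains (beneath) "G facet_of P" "v \<in> Hplus P G"
    | (on) F where "F facet_of P" "v \<in> affine hull F" "G = convex hull (insert v F)"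
    | (ridge) F1 F2 where "adjacent_facets P F1 F2" "v \<in> Hminus P F1" "v \<in> Hplus P F2"
        "G = convex hull (insert v (F1 \<inter> F2))"
proof -
  let ?Q = "convex hull (insert v P)"
  have "polyhedron ?Q"
    using polytope_P polytope_convex_hull_insert polytope_imp_polyhedron by blast
  then obtain a b where "a \<noteq> 0" and Q: "?Q \<subseteq> {x. a \<bullet> x \<le> b}" and G_eq: "G = ?Q \<inter> {x. a \<bullet> x = b}"
    using facet_of_polyhedron G by blast
  have P: "P \<subseteq> {x. a \<bullet> x \<le> b}" and "a \<bullet> v \<le> b"
    using Q P_subset_convex_hull_insert hull_inc[of v "insert v P"] by auto
  show thesis
  proof (cases "a \<bullet> v < b")
    case True
    then have GP: "G = P \<inter> {x. a \<bullet> x = b}"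
      using convex_hull_insert_Int_hyperplane_beneath[OF convex_P P] G_eq by simp
    then have "G face_of P"
      using face_of_Int_supporting_hyperplane_le[OF convex_P] P by blast
    then have "G facet_of P"
      using G aff_dim_P by (simp add: facet_of_def aff_dim_convex_hull_insert)
    moreover have "exposing_halfspace G a b"
      using \<open>a \<noteq> 0\<close> P GP by (simp add: exposing_halfspace_def)
    then have "v \<in> Hplus P G"
      using facet_side_iff(2)[OF \<open>G facet_of P\<close>] True by simp
    ultimately show thesis
      by (rule beneath)
  next
    case False
    then have "a \<bullet> v = b"
      using \<open>a \<bullet> v \<le> b\<close> by simp
    then show thesis
      using facet_of_convex_hull_insert_through_apex[OF assms Q G_eq] on ridge by metis
  qed
qed

theorem facets_convex_hull_insert:
  assumes "DIM('a) \<ge> 2"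
  shows "{G. G facet_of convex hull (insert v P)} =
      {F. F facet_of P \<and> v \<in> Hplus P F}
    \<union> {convex hull (insert v F) | F. F facet_of P \<and> v \<in> affine hull F}
    \<union> {convex hull (insert v (F \<inter> G)) | F G.
         adjacent_facets P F G \<and> v \<in> Hminus P F \<and> v \<in> Hplus P G}"
    (is "_ = ?beneath \<union> ?on \<union> ?ridge")
proof (intro equalityI subsetI)
  fix G assume "G \<in> {G. G facet_of convex hull (insert v P)}"
  then have "G facet_of convex hull (insert v P)"
    by simp
  then show "G \<in> ?beneath \<union> ?on \<union> ?ridge"
    by (rule facet_of_convex_hull_insert_cases[OF assms]) blast+
next
  fix G assume "G \<in> ?beneath \<union> ?on \<union> ?ridge"
  then show "G \<in> {G. G facet_of convex hull (insert v P)}"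
    using facet_of_convex_hull_insert_beneath facet_of_convex_hull_insert_on
      facet_of_convex_hull_insert_ridge by blast
qed

lemma rel_interior_facet_subset_interior:
  assumes F: "F facet_of P" and v: "v \<in> Hminus P F"
  shows "rel_interior F \<subseteq> interior (convex hull (insert v P))"
proof
  fix x assume x: "x \<in> rel_interior F"
  let ?Q = "convex hull (insert v P)"
  have "x \<in> ?Q"
    using x rel_interior_subset F facet_of_imp_subset P_subset_convex_hull_insert by blast
  show "x \<in> interior ?Q"
  proof (rule ccontr)
    assume "x \<notin> interior ?Q"
    moreover have "rel_interior ?Q = interior ?Q"
      using rel_interior_interior aff_dim_convex_hull_insert aff_dim_eq_full by blast
    ultimately have "x \<notin> rel_interior ?Q"
      by simp
    then obtain c where "c \<noteq> 0" and c: "\<And>y. y \<in> ?Q \<Longrightarrow> c \<bullet> x \<le> c \<bullet> y"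
      using supporting_hyperplane_rel_boundary[OF convex_convex_hull \<open>x \<in> ?Q\<close>] by metis
    then have "P \<subseteq> {y. (- c) \<bullet> y \<le> (- c) \<bullet> x}"
      using P_subset_convex_hull_insert by force
    moreover have "- c \<noteq> 0"
      using \<open>c \<noteq> 0\<close> by simp
    ultimately have "exposing_halfspace F (- c) ((- c) \<bullet> x)"
      by (intro exposing_halfspace_through_rel_interior[OF F x])
    then have "c \<bullet> v < c \<bullet> x"
      using facet_side_iff(1)[OF F] v by simp
    then show False
      using c[of v] by (simp add: hull_inc)
  qed
qed

end

section \<open>Faces of simplices\<close>

lemma face_of_simplex_simplex:
  assumes "n simplex S" "T face_of S"
  shows "aff_dim T simplex T"
proof -
  obtain C where C: "\<not> affine_dependent C" "S = convex hull C"
    using assms(1) unfolding simplex by blast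
  then obtain c where "c \<subseteq> C" "T = convex hull c"
    using face_of_convex_hull_affine_independent assms(2) by blast
  moreover have "\<not> affine_dependent c"
    using affine_independent_subset C(1) \<open>c \<subseteq> C\<close> by blast
  ultimately show ?thesis
    using aff_dim_affine_independent simplex_convex_hull by (metis aff_dim_convex_hull)
qed

lemma aff_dim_Int_facets_of_simplex:
  assumes S: "n simplex S" and A: "A facet_of S" and B: "B facet_of S" and "A \<noteq> B"
  shows "aff_dim (A \<inter> B) = n - 2"
proof -
  obtain C where C: "finite C" "\<not> affine_dependent C" "int (card C) = n + 1" "S = convex hull C"
    using S unfolding simplex by blast
  obtain u w where u: "u \<in> C" "A = convex hull (C - {u})" and w: "w \<in> C" "B = convex hull (C - {w})"
    using A B facet_of_convex_hull_affine_independent[OF C(2)] C(4) by metis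
  then have "u \<noteq> w"
    using \<open>A \<noteq> B\<close> by blast
  have "\<not> affine_dependent (C - {u, w})"
    using affine_independent_subset C(2) by blast
  moreover have "card {u, w} = 2"
    using \<open>u \<noteq> w\<close> by simp
  then have "card (C - {u, w}) = card C - 2"
    using card_Diff_subset[of "{u, w}" C] u(1) w(1) by simp
  moreover have "2 \<le> card C"
    using card_mono[OF C(1), of "{u, w}"] u(1) w(1) \<open>card {u, w} = 2\<close> by simp
  ultimately have "aff_dim (convex hull (C - {u, w})) = n - 2"
    using aff_dim_affine_independent[of "C - {u, w}"] C(3)
    by (simp add: aff_dim_convex_hull)
  moreover have "convex hull (C - {u, w}) \<subseteq> A" "convex hull (C - {u, w}) \<subseteq> B"
    unfolding u(2) w(2) by (intro hull_mono; blast)+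
  ultimately have lower: "n - 2 \<le> aff_dim (A \<inter> B)"
    using aff_dim_subset[of "convex hull (C - {u, w})" "A \<inter> B"] by simp
  have "A \<inter> B face_of S"
    using A B face_of_Int facet_of_imp_face_of by blast
  then have "A \<inter> B face_of A"
    using face_of_subset A facet_of_imp_subset by blast
  moreover have "A \<inter> B \<noteq> A"
    using facet_of_subset_imp_eq[OF A B] \<open>A \<noteq> B\<close> by blast
  ultimately have "aff_dim (A \<inter> B) < aff_dim A"
    using face_of_aff_dim_lt[OF face_of_imp_convex[OF facet_of_imp_face_of[OF A]]] by blast
  moreover have "aff_dim A = n - 1"
    using A aff_dim_simplex[OF S] by (simp add: facet_of_def)
  ultimately show ?thesis
    using lower by linarith
qed

context full_dim_polytope
begin

lemma simplex_facet_Int_adj: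
  assumes S: "simplex_facet P S" and F: "F \<in> adj P S" and "DIM('a) \<ge> 2"
  shows "simplex_facet F (S \<inter> F)"
proof -
  have simplex: "(aff_dim P - 1) simplex S"
    using S by (simp add: simplex_facet_def)
  have adj: "adjacent_facets P S F"
    using F by (simp add: adj_def)
  note ridge = ridge_facet_of_facets[OF adj \<open>DIM('a) \<ge> 2\<close>]
  have "aff_dim (S \<inter> F) simplex (S \<inter> F)"
    using face_of_simplex_simplex[OF simplex facet_of_imp_face_of[OF ridge(1)]] .
  then show ?thesis
    using ridge(2) adjacent_facetsD[OF adj] aff_dim_facet
    by (simp add: simplex_facet_def facet_of_def)
qed

lemma aff_dim_Int_adj_simplex_facet:
  assumes "DIM('a) \<ge> 2" and S: "simplex_facet P S"
    and X: "X \<in> adj P S" and Y: "Y \<in> adj P S" and "X \<noteq> Y"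
  shows "aff_dim (S \<inter> X \<inter> Y) = int DIM('a) - 3"
proof -
  have SP: "S facet_of P" and simplex: "(aff_dim P - 1) simplex S"
    using S by (auto simp: simplex_facet_def)
  have X_facet: "(S \<inter> X) facet_of S" and Y_facet: "(S \<inter> Y) facet_of S"
    using ridge_facet_of_facets(1) X Y \<open>DIM('a) \<ge> 2\<close> by (auto simp: adj_def)
  \<comment> \<open>No three facets share a ridge.\<close>
  have "S \<inter> X \<noteq> S \<inter> Y"
  proof
    assume "S \<inter> X = S \<inter> Y"
    moreover have "S \<noteq> X" "S \<noteq> Y"
      using X Y not_adj_self by blast+
    ultimately show False
      using facet_containing_ridge[OF \<open>DIM('a) \<ge> 2\<close> SP, of X Y] X Y \<open>X \<noteq> Y\<close>
        adjacent_facetsD by (auto simp: adj_def)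
  qed
  then have "aff_dim ((S \<inter> X) \<inter> (S \<inter> Y)) = (aff_dim P - 1) - 2"
    using aff_dim_Int_facets_of_simplex[OF simplex X_facet Y_facet] by blast
  then show ?thesis
    using aff_dim_P by (simp add: Int_assoc Int_left_commute)
qed

end

section \<open>Points of a V-region\<close>

context full_dim_polytope
begin

lemma Vregion_facet_side_iff:
  assumes v: "v \<in> Vregion P S \<F> \<N>" and F: "F facet_of P"
  shows "v \<in> Hminus P F \<longleftrightarrow> F \<in> insert S \<N>"
    and "v \<in> affine hull F \<longleftrightarrow> F \<in> \<F>"
    and "v \<in> Hplus P F \<longleftrightarrow> F \<notin> insert S (\<N> \<union> \<F>)"
proof -
  have "F \<in> insert S \<N> \<Longrightarrow> v \<in> Hminus P F" "F \<in> \<F> \<Longrightarrow> v \<in> affine hull F"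
    "F \<notin> insert S (\<N> \<union> \<F>) \<Longrightarrow> v \<in> Hplus P F"
    using v F unfolding Vregion_def by auto
  then show "v \<in> Hminus P F \<longleftrightarrow> F \<in> insert S \<N>"
    and "v \<in> affine hull F \<longleftrightarrow> F \<in> \<F>"
    and "v \<in> Hplus P F \<longleftrightarrow> F \<notin> insert S (\<N> \<union> \<F>)"
    using facet_sides_disjoint[OF F, of v] by blast+
qed

lemma ridge_pyramids_Vregion:
  assumes S: "S facet_of P" and v: "v \<in> Vregion P S \<F> \<N>"
  shows "{convex hull (insert v (F \<inter> G)) | F G.
           adjacent_facets P F G \<and> v \<in> Hminus P F \<and> v \<in> Hplus P G}
      = {convex hull (insert v (S \<inter> F)) | F. F \<in> adj P S - (\<F> \<union> \<N>)}
         \<union> {convex hull (insert v (N \<inter> F)) | N F. N \<in> \<N> \<and> F facet_of P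
               \<and> F \<notin> \<F> \<union> \<N> \<union> {S} \<and> adjacent_facets P N F}"
    (is "?ridge = ?S_ridges \<union> ?N_ridges")
proof -
  note side = Vregion_facet_side_iff[OF v]
  show ?thesis
  proof (intro equalityI subsetI)
    fix X assume "X \<in> ?ridge"
    then obtain F G where FG: "adjacent_facets P F G" "v \<in> Hminus P F" "v \<in> Hplus P G"
      and X: "X = convex hull (insert v (F \<inter> G))"
      by blast
    have "F \<in> insert S \<N>" "G \<notin> insert S (\<N> \<union> \<F>)"
      using side(1)[OF adjacent_facetsD(1)[OF FG(1)]] side(3)[OF adjacent_facetsD(2)[OF FG(1)]] FG
      by auto
    then show "X \<in> ?S_ridges \<union> ?N_ridges"
      using FG(1) X adjacent_facetsD(2)[OF FG(1)] unfolding adj_def by blast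
  next
    fix X assume "X \<in> ?S_ridges \<union> ?N_ridges"
    then show "X \<in> ?ridge"
    proof
      assume "X \<in> ?S_ridges"
      then obtain F where F: "F \<in> adj P S" "F \<notin> \<F> \<union> \<N>" "X = convex hull (insert v (S \<inter> F))"
        by blast
      have "F \<noteq> S"
        using F(1) not_adj_self by blast
      then have "v \<in> Hminus P S" "v \<in> Hplus P F"
        using side(1)[OF S] side(3)[OF adjacent_facetsD(2)] F by (auto simp: adj_def)
      then show "X \<in> ?ridge"
        using F by (auto simp: adj_def)
    next
      assume "X \<in> ?N_ridges"
      then obtain N F where NF: "N \<in> \<N>" "F facet_of P" "F \<notin> \<F> \<union> \<N> \<union> {S}"
        "adjacent_facets P N F" "X = convex hull (insert v (N \<inter> F))"
        by blast
      then have "v \<in> Hminus P N" "v \<in> Hplus P F"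
        using side(1)[OF adjacent_facetsD(1)[OF NF(4)]] side(3)[OF NF(2)] by auto
      then show "X \<in> ?ridge"
        using NF by blast
    qed
  qed
qed

lemma facets_convex_hull_insert_Vregion:
  assumes "DIM('a) \<ge> 2" and S: "S facet_of P" and "\<F> \<subseteq> adj P S"
    and v: "v \<in> Vregion P S \<F> \<N>"
  shows "{G. G facet_of convex hull (insert v P)} =
           {F. F facet_of P \<and> F \<notin> {S} \<union> \<N> \<union> \<F>}
         \<union> {convex hull (insert v (S \<inter> F)) | F. F \<in> adj P S - (\<F> \<union> \<N>)}
         \<union> {convex hull (insert v (N \<inter> F)) | N F. N \<in> \<N> \<and> F facet_of P
               \<and> F \<notin> \<F> \<union> \<N> \<union> {S} \<and> adjacent_facets P N F}
         \<union> {convex hull (insert v F) | F. F \<in> \<F>}"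
proof -
  note side = Vregion_facet_side_iff[OF v]
  have \<F>_facets: "F facet_of P" if "F \<in> \<F>" for F
    using that \<open>\<F> \<subseteq> adj P S\<close> by (auto simp: adj_def adjacent_facets_def)
  have beneath: "{F. F facet_of P \<and> v \<in> Hplus P F} = {F. F facet_of P \<and> F \<notin> {S} \<union> \<N> \<union> \<F>}"
    using side(3) by auto
  have on: "{convex hull (insert v F) | F. F facet_of P \<and> v \<in> affine hull F}
      = {convex hull (insert v F) | F. F \<in> \<F>}"
    using side(2) \<F>_facets by blast
  show ?thesis
    unfolding facets_convex_hull_insert[OF assms(1)] beneath on ridge_pyramids_Vregion[OF S v]
    by blast
qed

end

locale Vregion_configuration = full_dim_polytope P for P :: "'a::euclidean_space set" +
  fixes S :: "'a set" and \<F> \<N> :: "'a set set" and v :: 'a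
  assumes DIM_ge_2: "DIM('a) \<ge> 2"
    and simplex_facet_S: "simplex_facet P S"
    and \<F>_subset_adj: "\<F> \<subseteq> adj P S" and \<N>_subset_adj: "\<N> \<subseteq> adj P S"
    and disjoint_\<F>_\<N>: "\<F> \<inter> \<N> = {}"
    and nonsimple_\<F>: "nonsimple P S \<F>"
    and v_in_Vregion: "v \<in> Vregion P S \<F> \<N>"
begin

lemma facet_S: "S facet_of P"
  using simplex_facet_S by (simp add: simplex_facet_def)

lemma adjacent_S_if_in_\<F>: "F \<in> \<F> \<Longrightarrow> adjacent_facets P S F"
  using \<F>_subset_adj by (auto simp: adj_def)

lemma nonsimple_not_adjacent:
  assumes F: "F \<in> \<F>" and G: "G \<in> \<F>" and "F \<noteq> G"
  shows "\<not> adjacent_facets P F G"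
proof
  assume adj: "adjacent_facets P F G"
  define K where "K = S \<inter> F \<inter> G"
  have "K face_of P"
    unfolding K_def using facet_S adjacent_facetsD[OF adj] face_of_Int facet_of_imp_face_of by metis
  then have "K face_of F" "K face_of G" "K face_of S"
    unfolding K_def using face_of_subset adjacent_facetsD[OF adj] facet_S facet_of_imp_subset
    by blast+
  moreover have "aff_dim K = aff_dim P - 3"
    unfolding K_def
    using aff_dim_Int_adj_simplex_facet[OF DIM_ge_2 simplex_facet_S] F G \<open>F \<noteq> G\<close>
      \<F>_subset_adj aff_dim_P by auto
  ultimately show False
    using nonsimple_\<F> adj F G unfolding nonsimple_def by blast
qed

lemma Hminus_Int_facet_Vregion:
  assumes F: "F \<in> \<F>" and X: "X \<in> {N \<inter> F | N. N \<in> \<N> \<and> N \<inter> F facet_of F} \<union> {S \<inter> F}"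
  shows "v \<in> Hminus F X"
proof -
  note adjSF = adjacent_S_if_in_\<F>[OF F]
  note FP = adjacent_facetsD(2)[OF adjSF]
  have beyond: "v \<in> Hminus F (F \<inter> G)"
    if "G \<in> insert S \<N>" "aff_dim (F \<inter> G) = int DIM('a) - 2" for G
  proof -
    have "G facet_of P" "G \<noteq> F"
      using that facet_S \<N>_subset_adj F disjoint_\<F>_\<N> adjSF not_adj_self
      by (auto simp: adj_def adjacent_facets_def)
    then show ?thesis
      using Hminus_Int_facet[OF FP] Vregion_facet_side_iff(1)[OF v_in_Vregion] that
        Vregion_facet_side_iff(2)[OF v_in_Vregion FP] F by blast
  qed
  show ?thesis
  proof (cases "X = S \<inter> F")
    case True
    then show ?thesis
      using beyond[of S] adjacent_facetsD(3)[OF adjSF] by (simp add: Int_commute)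
  next
    case False
    then obtain N where "N \<in> \<N>" "X = N \<inter> F" "(N \<inter> F) facet_of F"
      using X by blast
    moreover have "N \<inter> F = F \<inter> N"
      by blast
    ultimately show ?thesis
      using beyond[of N] aff_dim_facet[OF FP] by (simp add: facet_of_def)
  qed
qed

lemma Hplus_Int_facet_Vregion:
  assumes F: "F \<in> \<F>" and T: "T facet_of F"
    and "T \<notin> {N \<inter> F | N. N \<in> \<N> \<and> N \<inter> F facet_of F} \<union> {S \<inter> F}"
  shows "v \<in> Hplus F T"
proof -
  note FP = adjacent_facetsD(2)[OF adjacent_S_if_in_\<F>[OF F]]
  obtain G where G: "G facet_of P" "G \<noteq> F" "T = F \<inter> G"
    using facet_of_facet_eq_Int[OF FP T] by blast
  have dim: "aff_dim (F \<inter> G) = int DIM('a) - 2"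
    using T G(3) aff_dim_facet[OF FP] by (simp add: facet_of_def)
  have GF: "T = G \<inter> F"
    using G(3) by blast
  then have "G \<noteq> S" "G \<notin> \<N>"
    using T assms(3) by auto
  moreover have "G \<notin> \<F>"
    using nonsimple_not_adjacent[OF F _ not_sym[OF G(2)]] FP G(1) dim aff_dim_P
    by (auto simp: adjacent_facets_def)
  ultimately show ?thesis
    using Hplus_Int_facet[OF FP G(1) not_sym[OF G(2)] dim] Vregion_facet_side_iff[OF v_in_Vregion]
      G(1,3) FP F by blast
qed

lemma pseudo_stacking_facet:
  assumes F: "F \<in> \<F>"
  shows "pseudo_stacking F (S \<inter> F) {} {N \<inter> F | N. N \<in> \<N> \<and> N \<inter> F facet_of F} v
           (convex hull (insert v F))"
proof -
  have FS: "F \<in> adj P S"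
    using F \<F>_subset_adj by blast
  note FP = adjacent_facetsD(2)[OF adjacent_S_if_in_\<F>[OF F]]
  have simplex: "simplex_facet F (S \<inter> F)"
    using simplex_facet_Int_adj[OF simplex_facet_S FS DIM_ge_2] .
  have "N \<inter> F \<in> adj F (S \<inter> F)" if "N \<in> \<N>" "N \<inter> F facet_of F" for N
  proof -
    have "F \<noteq> N"
      using that F disjoint_\<F>_\<N> by blast
    then have "aff_dim (S \<inter> F \<inter> N) = aff_dim F - 2"
      using aff_dim_Int_adj_simplex_facet[OF DIM_ge_2 simplex_facet_S FS] that(1) \<N>_subset_adj
        aff_dim_facet[OF FP] by auto
    moreover have "(S \<inter> F) \<inter> (N \<inter> F) = S \<inter> F \<inter> N"
      by blast
    ultimately show ?thesis
      using simplex that(2) by (simp add: adj_def adjacent_facets_def simplex_facet_def)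
  qed
  moreover have "v \<in> Vregion F (S \<inter> F) {} {N \<inter> F | N. N \<in> \<N> \<and> N \<inter> F facet_of F}"
    unfolding Vregion_def
    using Vregion_facet_side_iff(2)[OF v_in_Vregion FP] F
      Hminus_Int_facet_Vregion[OF F] Hplus_Int_facet_Vregion[OF F]
    by (intro CollectI conjI ballI allI impI) auto
  moreover have "polytope F"
    using face_of_polytope_polytope[OF polytope_P facet_of_imp_face_of[OF FP]] .
  ultimately show ?thesis
    using simplex unfolding pseudo_stacking_def by blast
qed

end

theorem proposition2p9:
  fixes P S Q :: "'a::euclidean_space set" and \<F> \<N> :: "'a set set" and v :: 'a
  assumes "polytope P" and "aff_dim P = int DIM('a)" and "DIM('a) \<ge> 3"
    and "simplex_facet P S" and "bounded_position P S"
    and "\<F> \<subseteq> adj P S" and "\<N> \<subseteq> adj P S" and "\<F> \<inter> \<N> = {}"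
    and "nonsimple P S \<F>"
    and "v \<in> Vregion P S \<F> \<N>"
    and "Q = convex hull (insert v P)"
  shows "(rel_interior S \<subseteq> interior Q \<and> (\<forall>N\<in>\<N>. rel_interior N \<subseteq> interior Q))
    \<and> {G. G facet_of Q} =
           {F. F facet_of P \<and> F \<notin> {S} \<union> \<N> \<union> \<F>}
         \<union> {convex hull (insert v (S \<inter> F)) | F. F \<in> adj P S - (\<F> \<union> \<N>)}
         \<union> {convex hull (insert v (N \<inter> F)) | N F. N \<in> \<N> \<and> F facet_of P
               \<and> F \<notin> \<F> \<union> \<N> \<union> {S} \<and> adjacent_facets P N F}
         \<union> {convex hull (insert v F) | F. F \<in> \<F>}
    \<and> (\<forall>F\<in>\<F>. pseudo_stacking F (S \<inter> F) {}
               {N \<inter> F | N. N \<in> \<N> \<and> N \<inter> F facet_of F} v (convex hull (insert v F)))"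
proof -
  interpret Vregion_configuration P S \<F> \<N> v
    using assms(1-4,6-10) by unfold_locales simp_all
  have "rel_interior N \<subseteq> interior Q" if "N \<in> insert S \<N>" for N
  proof -
    have "N facet_of P"
      using that facet_S \<N>_subset_adj adjacent_facetsD by (auto simp: adj_def)
    then show ?thesis
      using rel_interior_facet_subset_interior Vregion_facet_side_iff(1)[OF v_in_Vregion] that
        assms(11) by blast
  qed
  then have interior: "rel_interior S \<subseteq> interior Q" "\<forall>N\<in>\<N>. rel_interior N \<subseteq> interior Q"
    by simp_all
  have facets: "{G. G facet_of Q} =
           {F. F facet_of P \<and> F \<notin> {S} \<union> \<N> \<union> \<F>}
         \<union> {convex hull (insert v (S \<inter> F)) | F. F \<in> adj P S - (\<F> \<union> \<N>)}
         \<union> {convex hull (insert v (N \<inter> F)) | N F. N \<in> \<N> \<and> F facet_of P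
               \<and> F \<notin> \<F> \<union> \<N> \<union> {S} \<and> adjacent_facets P N F}
         \<union> {convex hull (insert v F) | F. F \<in> \<F>}"
    unfolding assms(11)
    by (rule facets_convex_hull_insert_Vregion[OF DIM_ge_2 facet_S \<F>_subset_adj v_in_Vregion])
  show ?thesis
    using pseudo_stacking_facet by (intro conjI interior facets ballI)
qed

end
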